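(* Under the setting below, suppose additionally that $\underline y\le Y(a_{1:t})\le\overline y$ almost surely. If $\mathbb{P}(A_{1:t}=a_{1:t}\mid X_{0:N}(A_{1:N})\in B_{0:N})>\mathbb{P}(A_{1:t}=a_{1:t})$, then $$\mathbb{E}[\overline Y]-\mathbb{E}[\underline Y]>\mathbb{E}[\overline Y\mid X_{0:N}(A_{1:N})\in B_{0:N}]-\mathbb{E}[\underline Y\mid X_{0:N}(A_{1:N})\in B_{0:N}].$$
   Context: Horizon $T\ge1$, $\mathcal{X}_t=\mathbb{R}^{d_t}$, finite action spaces $\mathcal{A}_t$; potential outcomes $X_0$, $X_t(a_{1:t})\in\mathcal{X}_t$, random actions $A_{1:T}$, and real-valued potential outcomes $Y(a_{1:t})$ defined jointly; $X_{0:t}(a_{1:t})=(X_0,X_1(a_1),\dots,X_t(a_{1:t}))$. Fixed $t\in\{1,\dots,T\}$, $a_{1:t}\in\mathcal{A}_{1:t}$, measurable $B_{0:t}=B_0\times\cdots\times B_t$ with $\mathbb{P}(X_{0:t}(a_{1:t})\in B_{0:t})>0$, and $\underline y,\overline y\in\mathbb{R}$. $N=\max\{0\le s\le t:A_{1:s}=a_{1:s}\}$; $\underline Y=\mathbb{1}(A_{1:t}=a_{1:t})Y(A_{1:t})+\mathbb{1}(A_{1:t}\ne a_{1:t})\underline y$ and $\overline Y$ likewise with $\overline y$. Quantities evaluated at random actions denote the potential outcome indexed by the realized actions. *)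

theory Defs
  imports "HOL-Probability.Probability"
begin

definition act_hist :: "(nat \<Rightarrow> 'w \<Rightarrow> 'a) \<Rightarrow> nat \<Rightarrow> 'w \<Rightarrow> 'a list" where
  "act_hist A s \<omega> = map (\<lambda>i. A i \<omega>) [1..<Suc s]"

definition match_len :: "(nat \<Rightarrow> 'w \<Rightarrow> 'a) \<Rightarrow> 'a list \<Rightarrow> 'w \<Rightarrow> nat" where
  "match_len A a \<omega> = Max {s. s \<le> length a \<and> act_hist A s \<omega> = take s a}"

definition hist_event ::
  "'w measure \<Rightarrow> (nat \<Rightarrow> 'a list \<Rightarrow> 'w \<Rightarrow> 'x) \<Rightarrow> (nat \<Rightarrow> 'w \<Rightarrow> 'a) \<Rightarrow> 'a list \<Rightarrow> (nat \<Rightarrow> 'x set) \<Rightarrow> 'w set" where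
  "hist_event M X A a B = {\<omega> \<in> space M. \<forall>s \<le> match_len A a \<omega>. X s (act_hist A s \<omega>) \<omega> \<in> B s}"

definition fixed_event ::
  "'w measure \<Rightarrow> (nat \<Rightarrow> 'a list \<Rightarrow> 'w \<Rightarrow> 'x) \<Rightarrow> 'a list \<Rightarrow> (nat \<Rightarrow> 'x set) \<Rightarrow> 'w set" where
  "fixed_event M X a B = {\<omega> \<in> space M. \<forall>s \<le> length a. X s (take s a) \<omega> \<in> B s}"

definition clipped_Y :: "('a list \<Rightarrow> 'w \<Rightarrow> real) \<Rightarrow> (nat \<Rightarrow> 'w \<Rightarrow> 'a) \<Rightarrow> 'a list \<Rightarrow> real \<Rightarrow> 'w \<Rightarrow> real" where
  "clipped_Y Y A a c \<omega> =
     (if act_hist A (length a) \<omega> = a then Y (act_hist A (length a) \<omega>) \<omega> else c)"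

definition cprob :: "'w measure \<Rightarrow> 'w set \<Rightarrow> 'w set \<Rightarrow> real" where
  "cprob M F E = measure M (F \<inter> E) / measure M E"

definition cexp :: "'w measure \<Rightarrow> ('w \<Rightarrow> real) \<Rightarrow> 'w set \<Rightarrow> real" where
  "cexp M Z E = (\<integral>\<omega>. indicator E \<omega> * Z \<omega> \<partial>M) / measure M E"

end

theory Submission
  imports Defs
begin

text \<open>Where the actions follow \<open>a\<^sub>1\<^sub>:\<^sub>t\<close> the two clipped outcomes coincide, and elsewhere
  they differ by the constant \<open>yhi - ylo\<close>. Hence, both unconditionally and conditionally on
  the history event \<open>E\<close>, the difference of their means is \<open>(yhi - ylo)\<close> times the probability
  of deviating from \<open>a\<^sub>1\<^sub>:\<^sub>t\<close>. Conditioning on \<open>E\<close> raises the probability of following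
  \<open>a\<^sub>1\<^sub>:\<^sub>t\<close>, so it lowers the difference.\<close>

lemma length_act_hist [simp]: "length (act_hist A n \<omega>) = n"
  by (simp add: act_hist_def)

lemma nth_act_hist [simp]: "i < n \<Longrightarrow> act_hist A n \<omega> ! i = A (Suc i) \<omega>"
  by (simp add: act_hist_def del: upt_Suc)

lemma act_hist_eq_iff:
  "act_hist A (length a) \<omega> = a \<longleftrightarrow> (\<forall>i<length a. A (Suc i) \<omega> = a ! i)"
  by (simp add: list_eq_iff_nth_eq)

lemma clipped_Y_eq:
  "clipped_Y Y A a c = (\<lambda>\<omega>. if act_hist A (length a) \<omega> = a then Y a \<omega> else c)"
  unfolding clipped_Y_def by auto

lemma clipped_Y_diff:
  "clipped_Y Y A a hi \<omega> - clipped_Y Y A a lo \<omega> = (if act_hist A (length a) \<omega> = a then 0 else hi - lo)"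
  by (simp add: clipped_Y_def)

lemma sets_act_hist_eq:
  assumes "\<And>i. i < length a \<Longrightarrow> A (Suc i) \<in> M \<rightarrow>\<^sub>M count_space (S i)"
    and "\<And>i. i < length a \<Longrightarrow> a ! i \<in> S i"
  shows "{\<omega> \<in> space M. act_hist A (length a) \<omega> = a} \<in> sets M"
proof -
  have "{\<omega> \<in> space M. A (Suc i) \<omega> = a ! i} \<in> sets M" if "i < length a" for i
  proof -
    have "A (Suc i) -` {a ! i} \<inter> space M \<in> sets M"
      by (rule measurable_sets[OF assms(1)[OF that]]) (simp add: assms(2)[OF that])
    moreover have "A (Suc i) -` {a ! i} \<inter> space M = {\<omega> \<in> space M. A (Suc i) \<omega> = a ! i}"
      by blast
    ultimately show ?thesis by simp
  qed
  then have "{\<omega> \<in> space M. \<forall>i \<in> {..<length a}. A (Suc i) \<omega> = a ! i} \<in> sets M"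
    by (intro sets.sets_Collect_finite_All) auto
  then show ?thesis by (simp only: act_hist_eq_iff Ball_def lessThan_iff)
qed

lemma cprob_pos_imp_measure_pos:
  assumes "cprob M F E > 0"
  shows "measure M E > 0"
proof -
  have "measure M E \<noteq> 0" using assms by (auto simp: cprob_def)
  then show ?thesis using measure_nonneg[of M E] by linarith
qed

lemma (in prob_space) cprob_space: "F \<in> events \<Longrightarrow> cprob M F (space M) = prob F"
  by (simp add: cprob_def prob_space Int_absorb1 sets.sets_into_space)

lemma (in prob_space) cexp_space: "cexp M f (space M) = expectation f"
  unfolding cexp_def prob_space div_by_1 by (rule Bochner_Integration.integral_cong) simp_all

lemma (in finite_measure) integrable_If_const:
  fixes f :: "'a \<Rightarrow> real"
  assumes "integrable M f" "{\<omega> \<in> space M. P \<omega>} \<in> sets M"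
  shows "integrable M (\<lambda>\<omega>. if P \<omega> then f \<omega> else c)"
proof -
  let ?F = "{\<omega> \<in> space M. P \<omega>}"
  have "integrable M (\<lambda>\<omega>. f \<omega> * indicator ?F \<omega> + c * (1 - indicator ?F \<omega>))"
    using assms by (intro Bochner_Integration.integrable_add integrable_real_mult_indicator
        Bochner_Integration.integrable_mult_right Bochner_Integration.integrable_diff)
      (auto simp: integrable_indicator_iff less_top[symmetric])
  then show ?thesis
    by (rule Bochner_Integration.integrable_cong[THEN iffD1, rotated 2]) (auto simp: indicator_def)
qed

lemma (in finite_measure) integrable_clipped_Y:
  assumes "integrable M (Y a)" "{\<omega> \<in> space M. act_hist A (length a) \<omega> = a} \<in> sets M"
  shows "integrable M (clipped_Y Y A a c)"
  using assms by (simp add: clipped_Y_eq integrable_If_const)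

lemma (in finite_measure) cexp_diff_eq_cprob_compl:
  assumes f: "integrable M f" and g: "integrable M g"
    and F: "{\<omega> \<in> space M. P \<omega>} \<in> sets M" (is "?F \<in> sets M")
    and E: "E \<in> sets M" "measure M E \<noteq> 0"
    and fg: "\<And>\<omega>. f \<omega> - g \<omega> = (if P \<omega> then 0 else c)"
  shows "cexp M f E - cexp M g E = c * (1 - cprob M {\<omega> \<in> space M. P \<omega>} E)"
proof -
  have "(\<integral>\<omega>. indicator E \<omega> * f \<omega> \<partial>M) - (\<integral>\<omega>. indicator E \<omega> * g \<omega> \<partial>M)
      = (\<integral>\<omega>. indicator E \<omega> * f \<omega> - indicator E \<omega> * g \<omega> \<partial>M)"
    using integrable_real_mult_indicator[OF E(1) f] integrable_real_mult_indicator[OF E(1) g]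
    by (simp add: mult.commute)
  also have "\<dots> = (\<integral>\<omega>. c * (indicator E \<omega> - indicator (?F \<inter> E) \<omega>) \<partial>M)"
    using fg by (intro Bochner_Integration.integral_cong) (auto simp: indicator_def right_diff_distrib[symmetric])
  also have "\<dots> = c * (measure M E - measure M (?F \<inter> E))"
    using F E by (simp add: integrable_indicator_iff
        less_top[symmetric] Int_absorb1 sets.sets_into_space)
  finally show ?thesis
    using E(2) by (simp add: cexp_def cprob_def diff_divide_distrib[symmetric] field_simps)
qed

theorem proposition4p5:
  fixes M :: "'w measure"
    and T t :: nat
    and d :: "nat \<Rightarrow> nat"
    and Act :: "nat \<Rightarrow> 'a set"
    and X :: "nat \<Rightarrow> 'a list \<Rightarrow> 'w \<Rightarrow> (nat \<Rightarrow> real)"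
    and A :: "nat \<Rightarrow> 'w \<Rightarrow> 'a"
    and Y :: "'a list \<Rightarrow> 'w \<Rightarrow> real"
    and a :: "'a list"
    and B :: "nat \<Rightarrow> (nat \<Rightarrow> real) set"
    and ylo yhi :: real
  assumes P: "prob_space M"
    and T: "1 \<le> T"
    and t: "1 \<le> t" "t \<le> T"
    and Act_fin: "\<And>s. 1 \<le> s \<Longrightarrow> s \<le> T \<Longrightarrow> finite (Act s)"
    and A_meas: "\<And>s. 1 \<le> s \<Longrightarrow> s \<le> T \<Longrightarrow> A s \<in> M \<rightarrow>\<^sub>M count_space (Act s)"
    and X_meas: "\<And>s as. s \<le> T \<Longrightarrow> length as = s \<Longrightarrow> (\<forall>i<s. as ! i \<in> Act (Suc i)) \<Longrightarrow>
                   X s as \<in> M \<rightarrow>\<^sub>M PiM {..<d s} (\<lambda>_. borel)"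
    and Y_meas: "\<And>as. 1 \<le> length as \<Longrightarrow> length as \<le> T \<Longrightarrow> (\<forall>i<length as. as ! i \<in> Act (Suc i)) \<Longrightarrow>
                   Y as \<in> borel_measurable M"
    and a_len: "length a = t"
    and a_act: "\<forall>i<t. a ! i \<in> Act (Suc i)"
    and B_meas: "\<And>s. s \<le> t \<Longrightarrow> B s \<in> sets (PiM {..<d s} (\<lambda>_. borel))"
    and B_pos: "measure M (fixed_event M X a B) > 0"
    and y_order: "ylo < yhi"
    and Y_bound: "AE \<omega> in M. ylo \<le> Y a \<omega> \<and> Y a \<omega> \<le> yhi"
    and hyp: "cprob M {\<omega> \<in> space M. act_hist A t \<omega> = a} (hist_event M X A a B)
              > measure M {\<omega> \<in> space M. act_hist A t \<omega> = a}"
  shows "(\<integral>\<omega>. clipped_Y Y A a yhi \<omega> \<partial>M) - (\<integral>\<omega>. clipped_Y Y A a ylo \<omega> \<partial>M)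
         > cexp M (clipped_Y Y A a yhi) (hist_event M X A a B)
           - cexp M (clipped_Y Y A a ylo) (hist_event M X A a B)"
proof -
  interpret prob_space M by (rule P)
  define F where "F = {\<omega> \<in> space M. act_hist A t \<omega> = a}"
  define E where "E = hist_event M X A a B"
  have F_sets: "F \<in> sets M"
    unfolding F_def a_len[symmetric] using A_meas a_act t a_len
    by (intro sets_act_hist_eq[where S = "\<lambda>i. Act (Suc i)"]) auto
  have F_less: "prob F < cprob M F E"
    using hyp unfolding F_def E_def .
  then have E_pos: "measure M E > 0"
    using measure_nonneg[of M F] by (intro cprob_pos_imp_measure_pos[of M F]) linarith
  \<comment> \<open>No need to derive measurability of \<open>E\<close> from the hypotheses on \<open>X\<close> and \<open>B\<close>:
    non-measurable sets have measure 0.\<close>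
  then have E_sets: "E \<in> sets M" using measure_notin_sets by fastforce
  have "integrable M (Y a)"
  proof (rule integrable_const_bound[where B = "\<bar>ylo\<bar> + \<bar>yhi\<bar>"])
    show "AE \<omega> in M. norm (Y a \<omega>) \<le> \<bar>ylo\<bar> + \<bar>yhi\<bar>"
      using Y_bound by eventually_elim auto
  qed (use Y_meas a_len a_act t in auto)
  then have clipped_int: "integrable M (clipped_Y Y A a c)" for c
    using F_sets by (intro integrable_clipped_Y) (simp_all add: F_def a_len)
  note cexp_diff = cexp_diff_eq_cprob_compl[OF clipped_int clipped_int F_sets[unfolded F_def] _ _
      clipped_Y_diff[of Y A a yhi _ ylo, unfolded a_len], folded F_def]
  have "cexp M (clipped_Y Y A a yhi) E - cexp M (clipped_Y Y A a ylo) E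
      = (yhi - ylo) * (1 - cprob M F E)"
    using E_sets E_pos by (intro cexp_diff) simp_all
  also have "\<dots> < (yhi - ylo) * (1 - cprob M F (space M))"
    using F_less y_order F_sets by (simp add: cprob_space)
  also have "\<dots> = cexp M (clipped_Y Y A a yhi) (space M) - cexp M (clipped_Y Y A a ylo) (space M)"
    by (intro cexp_diff[symmetric]) (simp_all add: prob_space)
  finally show ?thesis unfolding cexp_space E_def .
qed

end
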